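(* Let $K\ge 2$ be an integer, $\mathcal{K}=\{1,\dots,K\}$ the set of players (user equipments), and $\mathcal{L}$ a finite set (access points). For each $k\in\mathcal{K}$ let $\mathcal{M}_k\subseteq\mathcal{L}$ be a nonempty set and let $\beta_{k,l}>0$ for $k\in\mathcal{K}$, $l\in\mathcal{L}$. Fix $\alpha\in\mathbb{R}$ and $0<\rho_{\min}\le\rho_{\max}$, and let each player $k$ have strategy set $\mathcal{P}_k=[\rho_{\min},\rho_{\max}]$; write $\boldsymbol{\rho}=(\rho_1,\dots,\rho_K)\in\Upsilon=\mathcal{P}_1\times\cdots\times\mathcal{P}_K$ and $\boldsymbol{\rho}_{(-k)}$ for the strategies of all players other than $k$. Define $c_k=\big(\sum_{l\in\mathcal{M}_k}\beta_{k,l}\big)^{\alpha}$ and the payoff of player $k$ by $$\mu_k(\alpha,\rho_k,\boldsymbol{\rho}_{(-k)})=\frac{\sum_{i\neq k}\rho_i c_i}{\rho_k c_k}+\rho_k c_k\sum_{i\neq k}\frac{1}{\rho_i c_i}.$$ Then the function $$u(\alpha,\boldsymbol{\rho})=\frac12\sum_{k\in\mathcal{K}}\mu_k(\alpha,\boldsymbol{\rho})$$ is an exact potential function for the game $\mathcal{G}(\alpha)=\{\mathcal{K},\{\mathcal{P}_k\}_k,\{\mu_k\}_k\}$, i.e., for every $k\in\mathcal{K}$, every $\boldsymbol{\rho}_{(-k)}$, and every $\rho_k,\rho_k'\in\mathcal{P}_k$, $$u(\alpha,\rho_k',\boldsymbol{\rho}_{(-k)})-u(\alpha,\rho_k,\boldsymbol{\rho}_{(-k)})=\mu_k(\alpha,\rho_k',\boldsymbol{\rho}_{(-k)})-\mu_k(\alpha,\rho_k,\boldsymbol{\rho}_{(-k)}).$$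 In particular $\mathcal{G}(\alpha)$ is an exact potential game.
   Context: A strategic game with player set $\mathcal{K}$, strategy sets $\mathcal{P}_k$ and payoffs $\mu_k:\Upsilon\to\mathbb{R}$ is an exact potential game if there is a function $u:\Upsilon\to\mathbb{R}$ (an exact potential function) such that any unilateral change of strategy by any player $k$ changes $u$ by exactly the same amount as it changes $\mu_k$. Here $\rho_k$ is the uplink data transmit power of user $k$, $\beta_{k,l}$ is the large-scale fading coefficient between user $k$ and access point $l$, and $\mathcal{M}_k$ is the set of access points serving user $k$. *)

theory Defs
  imports "HOL-Analysis.Analysis"
begin

text \<open>Players are 1..K; a strategy profile is a function rho :: nat => real,
  only its values on {1..K} matter.  Profile set Upsilon.\<close>

definition profiles :: "nat \<Rightarrow> real \<Rightarrow> real \<Rightarrow> (nat \<Rightarrow> real) set" where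
  "profiles K rmin rmax = {rho. \<forall>k\<in>{1..K}. rho k \<in> {rmin..rmax}}"

definition cfac :: "real \<Rightarrow> (nat \<Rightarrow> 'l set) \<Rightarrow> (nat \<Rightarrow> 'l \<Rightarrow> real) \<Rightarrow> nat \<Rightarrow> real" where
  "cfac \<alpha> M \<beta> k = (\<Sum>l\<in>M k. \<beta> k l) powr \<alpha>"

definition payoff :: "nat \<Rightarrow> real \<Rightarrow> (nat \<Rightarrow> 'l set) \<Rightarrow> (nat \<Rightarrow> 'l \<Rightarrow> real)
    \<Rightarrow> nat \<Rightarrow> (nat \<Rightarrow> real) \<Rightarrow> real" where
  "payoff K \<alpha> M \<beta> k rho =
     (\<Sum>i\<in>{1..K}-{k}. rho i * cfac \<alpha> M \<beta> i) / (rho k * cfac \<alpha> M \<beta> k)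
     + rho k * cfac \<alpha> M \<beta> k * (\<Sum>i\<in>{1..K}-{k}. 1 / (rho i * cfac \<alpha> M \<beta> i))"

definition potential :: "nat \<Rightarrow> real \<Rightarrow> (nat \<Rightarrow> 'l set) \<Rightarrow> (nat \<Rightarrow> 'l \<Rightarrow> real)
    \<Rightarrow> (nat \<Rightarrow> real) \<Rightarrow> real" where
  "potential K \<alpha> M \<beta> rho = (1/2) * (\<Sum>k\<in>{1..K}. payoff K \<alpha> M \<beta> k rho)"

definition exact_potential :: "nat set \<Rightarrow> (nat \<Rightarrow> real set) \<Rightarrow> (nat \<Rightarrow> (nat \<Rightarrow> real) \<Rightarrow> real)
    \<Rightarrow> ((nat \<Rightarrow> real) \<Rightarrow> real) \<Rightarrow> bool" where
  "exact_potential P S mu u \<longleftrightarrow>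
     (\<forall>k\<in>P. \<forall>rho. (\<forall>i\<in>P. rho i \<in> S i) \<longrightarrow> (\<forall>r'\<in>S k.
        u (rho(k := r')) - u rho = mu k (rho(k := r')) - mu k rho))"

end

theory Submission
  imports Defs
begin

text \<open>Writing \<open>x\<^sub>i = \<rho>\<^sub>i c\<^sub>i\<close>, the payoff of player \<open>k\<close> is \<open>\<Sum>\<^sub>i\<^sub>\<noteq>\<^sub>k (x\<^sub>i/x\<^sub>k + x\<^sub>k/x\<^sub>i)\<close>, a sum of a
  symmetric pair interaction over the partners of \<open>k\<close>. Hence \<open>u\<close> is the sum of that
  interaction over unordered pairs of players, and a unilateral deviation of player \<open>k\<close>
  changes exactly the pairs containing \<open>k\<close>, whose total is \<open>\<mu>\<^sub>k\<close>. The identity is purely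
  algebraic.\<close>

lemma sum_offdiag_remove:
  fixes f :: "'a \<Rightarrow> 'a \<Rightarrow> 'b::comm_ring_1"
  assumes "finite D" and "j \<in> D" and sym: "\<And>i k. f i k = f k i"
  shows "(\<Sum>k\<in>D. \<Sum>i\<in>D-{k}. f i k)
           = 2 * (\<Sum>i\<in>D-{j}. f i j) + (\<Sum>k\<in>D-{j}. \<Sum>i\<in>D-{k,j}. f i k)"
proof -
  have row: "(\<Sum>i\<in>D-{k}. f i k) = f j k + (\<Sum>i\<in>D-{k,j}. f i k)" if "k \<in> D-{j}" for k
  proof -
    have "(\<Sum>i\<in>D-{k}. f i k) = f j k + (\<Sum>i\<in>D-{k}-{j}. f i k)"
      using that assms(1,2) by (intro sum.remove) auto
    moreover have "D-{k}-{j} = D-{k,j}" by auto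
    ultimately show ?thesis by simp
  qed
  have "(\<Sum>k\<in>D. \<Sum>i\<in>D-{k}. f i k)
          = (\<Sum>i\<in>D-{j}. f i j) + (\<Sum>k\<in>D-{j}. \<Sum>i\<in>D-{k}. f i k)"
    using assms(1,2) by (simp add: sum.remove)
  also have "(\<Sum>k\<in>D-{j}. \<Sum>i\<in>D-{k}. f i k)
               = (\<Sum>k\<in>D-{j}. f j k) + (\<Sum>k\<in>D-{j}. \<Sum>i\<in>D-{k,j}. f i k)"
    by (simp add: row sum.distrib)
  also have "(\<Sum>k\<in>D-{j}. f j k) = (\<Sum>i\<in>D-{j}. f i j)"
    using sym by simp
  finally show ?thesis by (simp add: algebra_simps)
qed

lemma sum_offdiag_diff:
  fixes f g :: "'a \<Rightarrow> 'a \<Rightarrow> 'b::comm_ring_1"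
  assumes "finite D" and "j \<in> D"
    and "\<And>i k. f i k = f k i" and "\<And>i k. g i k = g k i"
    and agree: "\<And>i k. i \<noteq> j \<Longrightarrow> k \<noteq> j \<Longrightarrow> f i k = g i k"
  shows "(\<Sum>k\<in>D. \<Sum>i\<in>D-{k}. f i k) - (\<Sum>k\<in>D. \<Sum>i\<in>D-{k}. g i k)
           = 2 * ((\<Sum>i\<in>D-{j}. f i j) - (\<Sum>i\<in>D-{j}. g i j))"
proof -
  have "(\<Sum>k\<in>D-{j}. \<Sum>i\<in>D-{k,j}. f i k) = (\<Sum>k\<in>D-{j}. \<Sum>i\<in>D-{k,j}. g i k)"
    using agree by (intro sum.cong) auto
  then show ?thesis
    using sum_offdiag_remove[of D j f] sum_offdiag_remove[of D j g] assms(1-4)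
    by (simp add: algebra_simps)
qed

definition ratio_pair :: "real \<Rightarrow> real \<Rightarrow> real" where
  "ratio_pair a b = a / b + b / a"

lemma ratio_pair_commute: "ratio_pair a b = ratio_pair b a"
  unfolding ratio_pair_def by simp

lemma payoff_eq_sum_ratio_pair:
  "payoff K \<alpha> M \<beta> k \<rho> =
     (\<Sum>i\<in>{1..K}-{k}. ratio_pair (\<rho> i * cfac \<alpha> M \<beta> i) (\<rho> k * cfac \<alpha> M \<beta> k))"
  unfolding payoff_def ratio_pair_def
  by (simp add: sum.distrib sum_divide_distrib sum_distrib_left)

lemma potential_eq_sum_ratio_pair:
  "potential K \<alpha> M \<beta> \<rho> = (1/2) *
     (\<Sum>k\<in>{1..K}. \<Sum>i\<in>{1..K}-{k}. ratio_pair (\<rho> i * cfac \<alpha> M \<beta> i) (\<rho> k * cfac \<alpha> M \<beta> k))"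
  unfolding potential_def payoff_eq_sum_ratio_pair ..

theorem corollary1:
  fixes K :: nat and L :: "'l set" and M :: "nat \<Rightarrow> 'l set"
    and \<beta> :: "nat \<Rightarrow> 'l \<Rightarrow> real" and \<alpha> \<rho>min \<rho>max :: real
  assumes "K \<ge> 2" and "finite L"
    and "\<And>k. k \<in> {1..K} \<Longrightarrow> M k \<subseteq> L \<and> M k \<noteq> {}"
    and "\<And>k l. k \<in> {1..K} \<Longrightarrow> l \<in> L \<Longrightarrow> \<beta> k l > 0"
    and "0 < \<rho>min" and "\<rho>min \<le> \<rho>max"
  shows "exact_potential {1..K} (\<lambda>_. {\<rho>min..\<rho>max}) (\<lambda>k. payoff K \<alpha> M \<beta> k)
           (potential K \<alpha> M \<beta>)"
  unfolding exact_potential_def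
proof (intro ballI allI impI)
  fix j and \<rho> :: "nat \<Rightarrow> real" and r' :: real
  assume "j \<in> {1..K}"
  define c where "c = cfac \<alpha> M \<beta>"
  define \<rho>' where "\<rho>' = \<rho>(j := r')"
  have "(\<Sum>k\<in>{1..K}. \<Sum>i\<in>{1..K}-{k}. ratio_pair (\<rho>' i * c i) (\<rho>' k * c k))
        - (\<Sum>k\<in>{1..K}. \<Sum>i\<in>{1..K}-{k}. ratio_pair (\<rho> i * c i) (\<rho> k * c k))
      = 2 * ((\<Sum>i\<in>{1..K}-{j}. ratio_pair (\<rho>' i * c i) (\<rho>' j * c j))
             - (\<Sum>i\<in>{1..K}-{j}. ratio_pair (\<rho> i * c i) (\<rho> j * c j)))"
    using \<open>j \<in> {1..K}\<close>
    by (intro sum_offdiag_diff) (auto simp: \<rho>'_def intro: ratio_pair_commute)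
  then show "potential K \<alpha> M \<beta> \<rho>' - potential K \<alpha> M \<beta> \<rho>
               = payoff K \<alpha> M \<beta> j \<rho>' - payoff K \<alpha> M \<beta> j \<rho>"
    unfolding potential_eq_sum_ratio_pair payoff_eq_sum_ratio_pair c_def by simp
qed

end
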